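(* Let $m\geq k\geq 2$, let $I:\{1,\dots,m\}\to\{1,\dots,k\}$ assign each client $i$ to its data generating distribution $\varphi_{I(i)}$, and let $g_1,\dots,g_m\in\mathbb{R}^d$ be the nonzero empirical risk gradients $g_i=\nabla r_i(\theta^* )$ of the clients at a stationary point $\theta^*$ of the Federated Learning objective, with $\alpha_{i,j}=\alpha(g_i,g_j)$. Define $\alpha_{intra}^{min}:=\min_{i,j:\,I(i)=I(j)}\alpha_{i,j}$ and $\alpha_{cross}^{max}:=\min_{c_1\dot\cup c_2=\{1,\dots,m\}}\max_{i\in c_1,j\in c_2}\alpha_{i,j}$ (minimum over bi-partitions into nonempty sets). If $\alpha_{intra}^{min}>\alpha_{cross}^{max}$, then every bi-partitioning $$c_1,c_2\in\arg\min_{c_1\dot\cup c_2=\{1,\dots,m\}}\Big(\max_{i\in c_1,j\in c_2}\alpha_{i,j}\Big)$$ is correct, i.e. $I(i)\neq I(j)$ for all $i\in c_1$, $j\in c_2$.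
   Context: For nonzero $a,b\in\mathbb{R}^d$, $\alpha(a,b)=\frac{\langle a,b\rangle}{\|a\|\|b\|}$. A bi-partitioning of $\{1,\dots,m\}$ is a pair of disjoint nonempty sets $c_1,c_2$ whose union is $\{1,\dots,m\}$; it is called correct if $I(i)\neq I(j)$ for all $i\in c_1$, $j\in c_2$. Here $r_i$ is client $i$'s empirical risk and the Federated Learning objective is $F(\theta)=\sum_i \frac{|D_i|}{|D|}r_i(\theta)$. *)

theory Defs
  imports "HOL-Analysis.Analysis"
begin

definition cos_sim :: "real^'d \<Rightarrow> real^'d \<Rightarrow> real" where
  "cos_sim a b = inner a b / (norm a * norm b)"

definition bipartition :: "nat \<Rightarrow> nat set \<Rightarrow> nat set \<Rightarrow> bool" where
  "bipartition m c1 c2 \<longleftrightarrow>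
     c1 \<noteq> {} \<and> c2 \<noteq> {} \<and> c1 \<inter> c2 = {} \<and> c1 \<union> c2 = {1..m}"

definition correct_bipartition :: "(nat \<Rightarrow> nat) \<Rightarrow> nat set \<Rightarrow> nat set \<Rightarrow> bool" where
  "correct_bipartition I c1 c2 \<longleftrightarrow> (\<forall>i\<in>c1. \<forall>j\<in>c2. I i \<noteq> I j)"

definition cross_sim :: "(nat \<Rightarrow> real^'d) \<Rightarrow> nat set \<Rightarrow> nat set \<Rightarrow> real" where
  "cross_sim g c1 c2 = Max {cos_sim (g i) (g j) | i j. i \<in> c1 \<and> j \<in> c2}"

definition alpha_intra_min :: "nat \<Rightarrow> (nat \<Rightarrow> nat) \<Rightarrow> (nat \<Rightarrow> real^'d) \<Rightarrow> real" where
  "alpha_intra_min m I g =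
     Min {cos_sim (g i) (g j) | i j. i \<in> {1..m} \<and> j \<in> {1..m} \<and> I i = I j}"

definition alpha_cross_max :: "nat \<Rightarrow> (nat \<Rightarrow> real^'d) \<Rightarrow> real" where
  "alpha_cross_max m g = Min {cross_sim g c1 c2 | c1 c2. bipartition m c1 c2}"

end

theory Submission
  imports Defs
begin

text \<open>If a bi-partitioning separated two clients i, j with I(i) = I(j), then
  alpha_intra_min \<le> alpha(g_i, g_j) \<le> cross_sim c1 c2. Hence every bi-partitioning whose
  cross similarity lies below alpha_intra_min is correct, and an arg-min bi-partitioning has
  cross similarity alpha_cross_max.\<close>

lemma cos_sim_le_cross_sim:
  assumes "finite c1" "finite c2" "i \<in> c1" "j \<in> c2"
  shows "cos_sim (g i) (g j) \<le> cross_sim g c1 c2"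
proof -
  have "{cos_sim (g i) (g j) | i j. i \<in> c1 \<and> j \<in> c2}
      = (\<lambda>(i, j). cos_sim (g i) (g j)) ` (c1 \<times> c2)"
    by auto
  then show ?thesis
    unfolding cross_sim_def using assms by (intro Max_ge) auto
qed

lemma alpha_intra_min_le_cos_sim:
  assumes "i \<in> {1..m}" "j \<in> {1..m}" "I i = I j"
  shows "alpha_intra_min m I g \<le> cos_sim (g i) (g j)"
proof -
  have "{cos_sim (g i) (g j) | i j. i \<in> {1..m} \<and> j \<in> {1..m} \<and> I i = I j}
      = (\<lambda>(i, j). cos_sim (g i) (g j)) ` {p \<in> {1..m} \<times> {1..m}. I (fst p) = I (snd p)}"
    by force
  then show ?thesis
    unfolding alpha_intra_min_def using assms by (intro Min_le) auto
qed

lemma correct_bipartition_if_cross_sim_less: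
  assumes "bipartition m c1 c2" "cross_sim g c1 c2 < alpha_intra_min m I g"
  shows "correct_bipartition I c1 c2"
  unfolding correct_bipartition_def
proof (intro ballI notI)
  fix i j assume "i \<in> c1" "j \<in> c2" "I i = I j"
  have "c1 \<subseteq> {1..m}" "c2 \<subseteq> {1..m}"
    using \<open>bipartition m c1 c2\<close> unfolding bipartition_def by auto
  then have "alpha_intra_min m I g \<le> cos_sim (g i) (g j)"
    using \<open>i \<in> c1\<close> \<open>j \<in> c2\<close> \<open>I i = I j\<close> by (intro alpha_intra_min_le_cos_sim) auto
  also have "\<dots> \<le> cross_sim g c1 c2"
    using \<open>c1 \<subseteq> {1..m}\<close> \<open>c2 \<subseteq> {1..m}\<close> \<open>i \<in> c1\<close> \<open>j \<in> c2\<close>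
    by (intro cos_sim_le_cross_sim) (auto intro: finite_subset)
  finally show False
    using assms(2) by linarith
qed

theorem corollary1:
  fixes m k :: nat
    and I :: "nat \<Rightarrow> nat"
    and r :: "nat \<Rightarrow> real^'d \<Rightarrow> real"
    and Dsize :: "nat \<Rightarrow> nat"
    and \<theta> :: "real^'d"
    and g :: "nat \<Rightarrow> real^'d"
    and c1 c2 :: "nat set"
  assumes "m \<ge> k" and "k \<ge> 2"
    and "\<forall>i\<in>{1..m}. I i \<in> {1..k}"
    and "\<forall>i\<in>{1..m}. Dsize i > 0"
    and "\<forall>i\<in>{1..m}. (r i has_derivative (\<lambda>h. inner (g i) h)) (at \<theta>)"
    and "((\<lambda>x. \<Sum>i\<in>{1..m}. (real (Dsize i) / real (\<Sum>j\<in>{1..m}. Dsize j)) * r i x)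
            has_derivative (\<lambda>h. 0)) (at \<theta>)"
    and "\<forall>i\<in>{1..m}. g i \<noteq> 0"
    and "alpha_intra_min m I g > alpha_cross_max m g"
    and "bipartition m c1 c2"
    and "cross_sim g c1 c2 = alpha_cross_max m g"
  shows "correct_bipartition I c1 c2"
  using assms(8-10) by (intro correct_bipartition_if_cross_sim_less[where m = m and g = g]) auto

end
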